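(* Let $K$ be a positive commutative semiring with its natural (pre)order. Let $C$ be a collection of $\mathrm{FO}(=,\neq\!\bot,\leq)$-definable atoms and $D$ a collection of $\mathrm{FO}(\bot?,\neq,\not\leq)$-definable atoms. Let $\phi\in\mathrm{FO}(C)$ and $\psi\in\mathrm{FO}(D)$. Let $\mathfrak A$ be a first-order $\tau$-structure with finite domain $A$, let $\mathbb{X}$ be a $K$-team of $\mathfrak A$, and let $X=\chi_K\circ\mathbb{X}$ be its possibilistic collapse. Then: (i) $\mathfrak A\models_{\mathbb{X}}\phi$ (in $K$-team semantics) implies $\mathfrak A\models_{X}\phi$ (in $\mathbb{B}$-team semantics); (ii) if moreover $K$ is $+$-dense, then $\mathfrak A\models_{X}\psi$ implies $\mathfrak A\models_{\mathbb{X}}\psi$.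
   Context: Commutative semiring $(K,+,\cdot,0,1)$. It is positive if $a+b=0$ implies $a=b=0$, and $ab=0$ implies $a=0$ or $b=0$. It is $+$-dense if every nonzero $a$ equals $b+c$ for some nonzero $b,c$. The natural order is $a\leq b$ iff $\exists c:a+c=b$. $\mathbb{B}=(\{0,1\},\vee,\wedge,0,1)$. $\chi_K\colon K\to\mathbb{B}$ maps $0$ to $0$ and nonzero elements to $1$. $K$-teams: $\mathrm{As}(V,A)$ is the set of assignments $V\to A$ for a finite variable set $V$. A $K$-team is $\mathbb{X}\colon\mathrm{As}(V,A)\to K$, with support $\mathrm{Sup}(\mathbb{X})=\{s:\mathbb{X}(s)\neq0\}$. Its possibilistic collapse is the $\mathbb{B}$-team $\chi_K\circ\mathbb{X}$. Fix a total order on variables, $V=\{x_1<\dots<x_k\}$, and put $\vec a_s=(s(x_1),\dots,s(x_k))$. $\pi_{\mathfrak A,\mathbb{X}}$ is the $K$-interpretation over $A$ for the vocabulary $\tau\cup\{R\}$, $R$ fresh of arity $k$, given by: - $\tau$-facts true in $\mathfrak A$ get $1$, false ones get $0$, and their negations get the opposite value; - $R(\vec a_s)\mapsto\mathbb{X}(s)$; - $\neg R(\vec a_s)\mapsto1$ if $\mathbb{X}(s)=0$, and $0$ otherwise. A $K$-interpretation is extended to formulae under assignments as follows: - literals get their $\pi$-values; - $x=y$ and $x\neq y$ get $1$ or $0$ according to their truth; - $\wedge$ is product and $\vee$ is sum; - $\forall$ is the product and $\exists$ the sum over $A$; - $\neg$ is evaluated via negation normal form. A formula (in)equality $\phi*\psi$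 has value $1$ if $[\![\phi]\!]*[\![\psi]\!]$ holds in the semiring, and $0$ otherwise. $\bot$ is a formula of constant value $0$. An atom $\alpha$ comes with, for each finite ordered domain $V$ containing its variables, a defining sentence $\phi_{\alpha,V}$ over $\tau\cup\{R\}$. Examples are dependence, independence and inclusion atoms, defined by sentences such as $\forall\vec u(\theta_{\vec i}(\vec u)\leq\theta_{\vec j}(\vec u))$ with $\theta_{\vec i}(\vec u)=\exists\vec x(R(\vec x)\wedge\vec x_{\vec i}=\vec u)$. It is $\mathcal L$-definable if all $\phi_{\alpha,V}\in\mathcal L$. $\mathrm{FO}(=,\neq\!\bot,\leq)$ (resp. $\mathrm{FO}(\bot?,\neq,\not\leq)$) consists of formulae built from first-order literals and formula (in)equalities of the forms $\phi=\psi$, $\phi\neq\bot$, $\phi\leq\psi$ (resp. $\phi=\bot$, $\phi\neq\psi$, $\phi\not\leq\psi$) between first-order formulae, using $\wedge,\vee,\forall,\exists$. $\mathrm{FO}(C)$ is negation-normal-form first-order logic over $\tau$ extended with (unnegated) atoms from $C$. $K$-team semantics for a $K$-team $\mathbb{X}$ with domain $V$ (quantified variables assumed not in the current domain): - $\mathfrak A\models_{\mathbb{X}}l$ for a first-order literal $l$ iff $\mathfrak A\models_s l$ for all $s\in\mathrm{Sup}(\mathbb{X})$; - $\mathfrak A\models_{\mathbb{X}}\alpha$ for an atom iff $[\![\phi_{\alpha,V}]\!]_{\pi_{\mathfrak A,\mathbb{X}}}\neq0$; - $\wedge$ is conjunction; - $\mathfrak A\models_{\mathbb{X}}\psi\vee\theta$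 iff $\mathfrak A\models_{\mathbb{Y}}\psi$ and $\mathfrak A\models_{\mathbb{Z}}\theta$ for some $\mathbb{Y},\mathbb{Z}$ with $\mathbb{Y}(s)+\mathbb{Z}(s)=\mathbb{X}(s)$ for all $s$; - $\mathfrak A\models_{\mathbb{X}}\forall x\psi$ iff $\mathfrak A\models_{\mathbb{Y}}\psi$ where $\mathbb{Y}(s[a/x])=\mathbb{X}(s)$ for all $s$ and all $a\in A$; - $\mathfrak A\models_{\mathbb{X}}\exists x\psi$ iff $\mathfrak A\models_{\mathbb{Y}}\psi$ for some $\mathbb{Y}$ with $\mathbb{X}(s)=\sum_{a\in A}\mathbb{Y}(s[a/x])$ for all $s$. For $K=\mathbb{B}$ this is standard team semantics. *)

theory Defs
  imports Main "HOL-Library.FuncSet"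
begin

datatype bsr = BF | BT

instantiation bsr :: comm_semiring_1
begin
definition zero_bsr :: bsr where "zero_bsr = BF"
definition one_bsr :: bsr where "one_bsr = BT"
definition plus_bsr :: "bsr \<Rightarrow> bsr \<Rightarrow> bsr" where
  "plus_bsr a b = (if a = BT \<or> b = BT then BT else BF)"
definition times_bsr :: "bsr \<Rightarrow> bsr \<Rightarrow> bsr" where
  "times_bsr a b = (if a = BT \<and> b = BT then BT else BF)"
instance
proof
  fix a b c :: bsr
  show "a + b + c = a + (b + c)" by (cases a; cases b; cases c) (auto simp: plus_bsr_def)
  show "a + b = b + a" by (cases a; cases b) (auto simp: plus_bsr_def)
  show "0 + a = a" by (cases a) (auto simp: plus_bsr_def zero_bsr_def)
  show "a * b * c = a * (b * c)" by (cases a; cases b; cases c) (auto simp: times_bsr_def)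
  show "a * b = b * a" by (cases a; cases b) (auto simp: times_bsr_def)
  show "1 * a = a" by (cases a) (auto simp: times_bsr_def one_bsr_def)
  show "0 * a = 0" by (cases a) (auto simp: times_bsr_def zero_bsr_def)
  show "a * 0 = 0" by (cases a) (auto simp: times_bsr_def zero_bsr_def)
  show "(a + b) * c = a * c + b * c"
    by (cases a; cases b; cases c) (auto simp: times_bsr_def plus_bsr_def)
  show "(0::bsr) \<noteq> 1" by (simp add: zero_bsr_def one_bsr_def)
qed
end

definition chi :: "'k::zero \<Rightarrow> bsr" where
  "chi a = (if a = 0 then BF else BT)"

definition positive_semiring :: "'k::comm_semiring_1 itself \<Rightarrow> bool" where
  "positive_semiring _ \<longleftrightarrow>
     (\<forall>a b::'k. a + b = 0 \<longrightarrow> a = 0 \<and> b = 0) \<and> (\<forall>a b::'k. a * b = 0 \<longrightarrow> a = 0 \<or> b = 0)"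

definition plus_dense :: "'k::comm_semiring_1 itself \<Rightarrow> bool" where
  "plus_dense _ \<longleftrightarrow> (\<forall>a::'k. a \<noteq> 0 \<longrightarrow> (\<exists>b c. b \<noteq> 0 \<and> c \<noteq> 0 \<and> a = b + c))"

definition nat_le :: "'k::comm_semiring_1 \<Rightarrow> 'k \<Rightarrow> bool" where
  "nat_le a b \<longleftrightarrow> (\<exists>c. a + c = b)"

text \<open>As(V,A): assignments V -> A, represented extensionally (undefined outside V).\<close>
definition As :: "'v set \<Rightarrow> 'a set \<Rightarrow> ('v \<Rightarrow> 'a) set" where
  "As V A = V \<rightarrow>\<^sub>E A"

text \<open>A K-team with domain V over A: a map As(V,A) -> K (extended by 0 outside As(V,A)).\<close>
definition is_team :: "'a set \<Rightarrow> 'v set \<Rightarrow> (('v \<Rightarrow> 'a) \<Rightarrow> 'k::zero) \<Rightarrow> bool" where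
  "is_team A V X \<longleftrightarrow> (\<forall>s. s \<notin> As V A \<longrightarrow> X s = 0)"

definition Supp :: "'a set \<Rightarrow> 'v set \<Rightarrow> (('v \<Rightarrow> 'a) \<Rightarrow> 'k::zero) \<Rightarrow> ('v \<Rightarrow> 'a) set" where
  "Supp A V X = {s \<in> As V A. X s \<noteq> 0}"

datatype cmp = CEq | CNeq | CLe | CNle

text \<open>Formulas over tau \<union> {R} in negation normal form, with the constant Bot
  and formula (in)equalities \<open>Cmp c \<phi> \<psi>\<close>.  The relation symbols of tau have type 'r.\<close>
datatype ('r, 'v) rf =
    Rl 'r "'v list" | NRl 'r "'v list"
  | RA "'v list" | NRA "'v list"
  | Eqv 'v 'v | Neqv 'v 'v
  | Bot
  | Conj "('r, 'v) rf" "('r, 'v) rf" | Disj "('r, 'v) rf" "('r, 'v) rf"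
  | Forall 'v "('r, 'v) rf" | Exists 'v "('r, 'v) rf"
  | Cmp cmp "('r, 'v) rf" "('r, 'v) rf"

primrec fv_rf :: "('r, 'v) rf \<Rightarrow> 'v set" where
  "fv_rf (Rl r xs) = set xs"
| "fv_rf (NRl r xs) = set xs"
| "fv_rf (RA xs) = set xs"
| "fv_rf (NRA xs) = set xs"
| "fv_rf (Eqv x y) = {x, y}"
| "fv_rf (Neqv x y) = {x, y}"
| "fv_rf Bot = {}"
| "fv_rf (Conj p q) = fv_rf p \<union> fv_rf q"
| "fv_rf (Disj p q) = fv_rf p \<union> fv_rf q"
| "fv_rf (Forall x p) = fv_rf p - {x}"
| "fv_rf (Exists x p) = fv_rf p - {x}"
| "fv_rf (Cmp c p q) = fv_rf p \<union> fv_rf q"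

primrec is_fo :: "nat \<Rightarrow> ('r, 'v) rf \<Rightarrow> bool" where
  "is_fo k (Rl r xs) = True"
| "is_fo k (NRl r xs) = True"
| "is_fo k (RA xs) = (length xs = k)"
| "is_fo k (NRA xs) = (length xs = k)"
| "is_fo k (Eqv x y) = True"
| "is_fo k (Neqv x y) = True"
| "is_fo k Bot = False"
| "is_fo k (Conj p q) = (is_fo k p \<and> is_fo k q)"
| "is_fo k (Disj p q) = (is_fo k p \<and> is_fo k q)"
| "is_fo k (Forall x p) = is_fo k p"
| "is_fo k (Exists x p) = is_fo k p"
| "is_fo k (Cmp c p q) = False"

primrec in_frag :: "(cmp \<Rightarrow> ('r, 'v) rf \<Rightarrow> ('r, 'v) rf \<Rightarrow> bool) \<Rightarrow> nat \<Rightarrow> ('r, 'v) rf \<Rightarrow> bool" where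
  "in_frag ok k (Rl r xs) = True"
| "in_frag ok k (NRl r xs) = True"
| "in_frag ok k (RA xs) = (length xs = k)"
| "in_frag ok k (NRA xs) = (length xs = k)"
| "in_frag ok k (Eqv x y) = True"
| "in_frag ok k (Neqv x y) = True"
| "in_frag ok k Bot = False"
| "in_frag ok k (Conj p q) = (in_frag ok k p \<and> in_frag ok k q)"
| "in_frag ok k (Disj p q) = (in_frag ok k p \<and> in_frag ok k q)"
| "in_frag ok k (Forall x p) = in_frag ok k p"
| "in_frag ok k (Exists x p) = in_frag ok k p"
| "in_frag ok k (Cmp c p q) = ok c p q"

text \<open>FO(=, \<noteq>Bot, \<le>): \<phi> = \<psi>, \<phi> \<noteq> Bot, \<phi> \<le> \<psi> with \<phi>, \<psi> first-order.\<close>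
definition frag_C :: "nat \<Rightarrow> ('r, 'v) rf \<Rightarrow> bool" where
  "frag_C k = in_frag (\<lambda>c p q. is_fo k p \<and>
      ((c = CEq \<and> is_fo k q) \<or> (c = CNeq \<and> q = Bot) \<or> (c = CLe \<and> is_fo k q))) k"

text \<open>FO(Bot?, \<noteq>, \<not>\<le>): \<phi> = Bot, \<phi> \<noteq> \<psi>, \<phi> \<not>\<le> \<psi> with \<phi>, \<psi> first-order.\<close>
definition frag_D :: "nat \<Rightarrow> ('r, 'v) rf \<Rightarrow> bool" where
  "frag_D k = in_frag (\<lambda>c p q. is_fo k p \<and>
      ((c = CEq \<and> q = Bot) \<or> (c = CNeq \<and> is_fo k q) \<or> (c = CNle \<and> is_fo k q))) k"

definition cmp_holds :: "cmp \<Rightarrow> 'k::comm_semiring_1 \<Rightarrow> 'k \<Rightarrow> bool" where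
  "cmp_holds c a b = (case c of CEq \<Rightarrow> a = b | CNeq \<Rightarrow> a \<noteq> b
                      | CLe \<Rightarrow> nat_le a b | CNle \<Rightarrow> \<not> nat_le a b)"

text \<open>Value of R(a_1,...,a_k): X(s) for the s in As(V,A) with vec a_s = (a_1,...,a_k),
  where V = {x_1 < ... < x_k}; 0 if there is no such s.\<close>
definition R_val :: "'a set \<Rightarrow> 'v::linorder set \<Rightarrow> (('v \<Rightarrow> 'a) \<Rightarrow> 'k::zero) \<Rightarrow> 'a list \<Rightarrow> 'k" where
  "R_val A V X as =
     (if \<exists>s \<in> As V A. map s (sorted_list_of_set V) = as
      then X (THE s. s \<in> As V A \<and> map s (sorted_list_of_set V) = as) else 0)"

primrec eval :: "'a set \<Rightarrow> ('r \<Rightarrow> 'a list \<Rightarrow> bool) \<Rightarrow> 'v::linorder set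
    \<Rightarrow> (('v \<Rightarrow> 'a) \<Rightarrow> 'k::comm_semiring_1) \<Rightarrow> ('v \<Rightarrow> 'a) \<Rightarrow> ('r, 'v) rf \<Rightarrow> 'k" where
  "eval A I V X s (Rl r xs) = (if I r (map s xs) then 1 else 0)"
| "eval A I V X s (NRl r xs) = (if I r (map s xs) then 0 else 1)"
| "eval A I V X s (RA xs) = R_val A V X (map s xs)"
| "eval A I V X s (NRA xs) = (if R_val A V X (map s xs) = 0 then 1 else 0)"
| "eval A I V X s (Eqv x y) = (if s x = s y then 1 else 0)"
| "eval A I V X s (Neqv x y) = (if s x \<noteq> s y then 1 else 0)"
| "eval A I V X s Bot = 0"
| "eval A I V X s (Conj p q) = eval A I V X s p * eval A I V X s q"
| "eval A I V X s (Disj p q) = eval A I V X s p + eval A I V X s q"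
| "eval A I V X s (Forall x p) = (\<Prod>a\<in>A. eval A I V X (s(x := a)) p)"
| "eval A I V X s (Exists x p) = (\<Sum>a\<in>A. eval A I V X (s(x := a)) p)"
| "eval A I V X s (Cmp c p q) =
     (if cmp_holds c (eval A I V X s p) (eval A I V X s q) then 1 else 0)"

text \<open>Value of a sentence (the assignment is irrelevant for sentences).\<close>
definition sent_val :: "'a set \<Rightarrow> ('r \<Rightarrow> 'a list \<Rightarrow> bool) \<Rightarrow> 'v::linorder set
    \<Rightarrow> (('v \<Rightarrow> 'a) \<Rightarrow> 'k::comm_semiring_1) \<Rightarrow> ('r, 'v) rf \<Rightarrow> 'k" where
  "sent_val A I V X p = eval A I V X (\<lambda>_. undefined) p"

text \<open>Atoms are named by elements of type 'c; avars c are the variables of atom c and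
  adef c V is its defining sentence phi_{c,V} over tau \<union> {R} (R of arity |V|).\<close>
definition definable ::
  "(nat \<Rightarrow> ('r, 'v) rf \<Rightarrow> bool) \<Rightarrow> ('c \<Rightarrow> 'v set) \<Rightarrow> ('c \<Rightarrow> 'v set \<Rightarrow> ('r, 'v) rf) \<Rightarrow> 'c \<Rightarrow> bool" where
  "definable L avars adef c \<longleftrightarrow>
     (\<forall>V. finite V \<and> avars c \<subseteq> V \<longrightarrow> L (card V) (adef c V) \<and> fv_rf (adef c V) = {})"

datatype ('r, 'v, 'c) tf =
    TRl 'r "'v list" | TNRl 'r "'v list"
  | TEq 'v 'v | TNeq 'v 'v
  | TAtom 'c
  | TAnd "('r, 'v, 'c) tf" "('r, 'v, 'c) tf" | TOr "('r, 'v, 'c) tf" "('r, 'v, 'c) tf"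
  | TAll 'v "('r, 'v, 'c) tf" | TEx 'v "('r, 'v, 'c) tf"

primrec atoms :: "('r, 'v, 'c) tf \<Rightarrow> 'c set" where
  "atoms (TRl r xs) = {}"
| "atoms (TNRl r xs) = {}"
| "atoms (TEq x y) = {}"
| "atoms (TNeq x y) = {}"
| "atoms (TAtom c) = {c}"
| "atoms (TAnd p q) = atoms p \<union> atoms q"
| "atoms (TOr p q) = atoms p \<union> atoms q"
| "atoms (TAll x p) = atoms p"
| "atoms (TEx x p) = atoms p"

primrec wf_tf :: "('c \<Rightarrow> 'v set) \<Rightarrow> 'v set \<Rightarrow> ('r, 'v, 'c) tf \<Rightarrow> bool" where
  "wf_tf av V (TRl r xs) = (set xs \<subseteq> V)"
| "wf_tf av V (TNRl r xs) = (set xs \<subseteq> V)"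
| "wf_tf av V (TEq x y) = ({x, y} \<subseteq> V)"
| "wf_tf av V (TNeq x y) = ({x, y} \<subseteq> V)"
| "wf_tf av V (TAtom c) = (av c \<subseteq> V)"
| "wf_tf av V (TAnd p q) = (wf_tf av V p \<and> wf_tf av V q)"
| "wf_tf av V (TOr p q) = (wf_tf av V p \<and> wf_tf av V q)"
| "wf_tf av V (TAll x p) = (x \<notin> V \<and> wf_tf av (insert x V) p)"
| "wf_tf av V (TEx x p) = (x \<notin> V \<and> wf_tf av (insert x V) p)"

text \<open>K-team semantics: tsat A I adef V X phi means A |=_X phi for the K-team X with domain V.\<close>
primrec tsat :: "'a set \<Rightarrow> ('r \<Rightarrow> 'a list \<Rightarrow> bool) \<Rightarrow> ('c \<Rightarrow> 'v set \<Rightarrow> ('r, 'v) rf)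
    \<Rightarrow> 'v::linorder set \<Rightarrow> (('v \<Rightarrow> 'a) \<Rightarrow> 'k::comm_semiring_1) \<Rightarrow> ('r, 'v, 'c) tf \<Rightarrow> bool" where
  "tsat A I adef V X (TRl r xs) = (\<forall>s \<in> Supp A V X. I r (map s xs))"
| "tsat A I adef V X (TNRl r xs) = (\<forall>s \<in> Supp A V X. \<not> I r (map s xs))"
| "tsat A I adef V X (TEq x y) = (\<forall>s \<in> Supp A V X. s x = s y)"
| "tsat A I adef V X (TNeq x y) = (\<forall>s \<in> Supp A V X. s x \<noteq> s y)"
| "tsat A I adef V X (TAtom c) = (sent_val A I V X (adef c V) \<noteq> 0)"
| "tsat A I adef V X (TAnd p q) = (tsat A I adef V X p \<and> tsat A I adef V X q)"
| "tsat A I adef V X (TOr p q) =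
     (\<exists>Y Z. is_team A V Y \<and> is_team A V Z \<and> (\<forall>s \<in> As V A. Y s + Z s = X s)
            \<and> tsat A I adef V Y p \<and> tsat A I adef V Z q)"
| "tsat A I adef V X (TAll x p) =
     tsat A I adef (insert x V)
       (\<lambda>t. if t \<in> As (insert x V) A then X (t(x := undefined)) else 0) p"
| "tsat A I adef V X (TEx x p) =
     (\<exists>Y. is_team A (insert x V) Y \<and> (\<forall>s \<in> As V A. X s = (\<Sum>a\<in>A. Y (s(x := a))))
          \<and> tsat A I adef (insert x V) Y p)"

end

theory Submission
  imports Defs
begin

text \<open>Since \<open>K\<close> is positive, \<open>\<chi>\<^sub>K\<close> is a semiring homomorphism onto the Boolean semiring, so
  on first-order formulas over \<open>\<tau> \<union> {R}\<close> the value under the collapse is the collapse of the value.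
  Equalities, non-emptiness and the natural order are preserved by \<open>\<chi>\<^sub>K\<close>, and their negations are
  reflected; hence atoms defined in \<open>FO(=,\<noteq>\<bottom>,\<le>)\<close> pass from \<open>\<X>\<close> to its collapse, and atoms defined
  in \<open>FO(\<bottom>?,\<noteq>,\<not>\<le>)\<close> from the collapse back to \<open>\<X>\<close>. The team connectives follow by induction:
  downwards, the collapse of a splitting of \<open>\<X>\<close> splits the collapse of \<open>\<X>\<close>; upwards, \<open>+\<close>-density
  lifts every splitting of the collapse to one of \<open>\<X>\<close>, by writing each nonzero weight as a sum of
  as many nonzero weights as needed.\<close>

section \<open>Positive semirings and the collapse map\<close>

lemma bsr_eqI: "((x::bsr) = 0 \<longleftrightarrow> y = 0) \<Longrightarrow> x = y"
  by (cases x; cases y) (auto simp: zero_bsr_def)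

lemma positive_semiring_bsr: "positive_semiring TYPE(bsr)"
  unfolding positive_semiring_def zero_bsr_def plus_bsr_def times_bsr_def
  by (metis bsr.exhaust bsr.distinct(1))

lemma chi_eq_0_iff [simp]: "chi a = 0 \<longleftrightarrow> a = 0"
  by (simp add: chi_def zero_bsr_def)

lemma chi_eq_iff: "chi a = chi b \<longleftrightarrow> (a = 0 \<longleftrightarrow> b = 0)"
  by (simp add: chi_def)

lemma chi_zero [simp]: "chi 0 = 0"
  by simp

lemma chi_one [simp]: "chi (1::'k::comm_semiring_1) = 1"
  by (rule bsr_eqI) simp

lemma positive_add_eq_0_iff:
  "positive_semiring TYPE('k::comm_semiring_1) \<Longrightarrow> (a::'k) + b = 0 \<longleftrightarrow> a = 0 \<and> b = 0"
  unfolding positive_semiring_def by (metis add_0)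

lemma positive_mult_eq_0_iff:
  "positive_semiring TYPE('k::comm_semiring_1) \<Longrightarrow> (a::'k) * b = 0 \<longleftrightarrow> a = 0 \<or> b = 0"
  unfolding positive_semiring_def by (metis mult_zero_left mult_zero_right)

lemma positive_sum_eq_0_iff:
  assumes "positive_semiring TYPE('k::comm_semiring_1)" and "finite S"
  shows "sum (f :: _ \<Rightarrow> 'k) S = 0 \<longleftrightarrow> (\<forall>x\<in>S. f x = 0)"
  using assms(2) by (induction S rule: finite_induct) (auto simp: positive_add_eq_0_iff[OF assms(1)])

lemma positive_prod_eq_0_iff:
  assumes "positive_semiring TYPE('k::comm_semiring_1)" and "finite S"
  shows "prod (f :: _ \<Rightarrow> 'k) S = 0 \<longleftrightarrow> (\<exists>x\<in>S. f x = 0)"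
  using assms(2) by (induction S rule: finite_induct) (auto simp: positive_mult_eq_0_iff[OF assms(1)])

lemmas bsr_add_eq_0_iff = positive_add_eq_0_iff[OF positive_semiring_bsr]
  and bsr_mult_eq_0_iff = positive_mult_eq_0_iff[OF positive_semiring_bsr]
  and bsr_sum_eq_0_iff = positive_sum_eq_0_iff[OF positive_semiring_bsr]
  and bsr_prod_eq_0_iff = positive_prod_eq_0_iff[OF positive_semiring_bsr]

lemma chi_add: "positive_semiring TYPE('k::comm_semiring_1) \<Longrightarrow> chi ((a::'k) + b) = chi a + chi b"
  by (rule bsr_eqI) (simp add: positive_add_eq_0_iff bsr_add_eq_0_iff)

lemma chi_mult: "positive_semiring TYPE('k::comm_semiring_1) \<Longrightarrow> chi ((a::'k) * b) = chi a * chi b"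
  by (rule bsr_eqI) (simp add: positive_mult_eq_0_iff bsr_mult_eq_0_iff)

lemma chi_sum:
  "positive_semiring TYPE('k::comm_semiring_1) \<Longrightarrow> finite S \<Longrightarrow>
   chi (sum (f :: _ \<Rightarrow> 'k) S) = (\<Sum>x\<in>S. chi (f x))"
  by (rule bsr_eqI) (simp add: positive_sum_eq_0_iff bsr_sum_eq_0_iff)

lemma chi_prod:
  "positive_semiring TYPE('k::comm_semiring_1) \<Longrightarrow> finite S \<Longrightarrow>
   chi (prod (f :: _ \<Rightarrow> 'k) S) = (\<Prod>x\<in>S. chi (f x))"
  by (rule bsr_eqI) (simp add: positive_prod_eq_0_iff bsr_prod_eq_0_iff)

lemma nat_le_chi:
  "positive_semiring TYPE('k::comm_semiring_1) \<Longrightarrow> nat_le (a::'k) b \<Longrightarrow> nat_le (chi a) (chi b)"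
  unfolding nat_le_def by (metis chi_add)

lemma plus_dense_sum_nonzero:
  fixes a :: "'k::comm_semiring_1"
  assumes dense: "plus_dense TYPE('k)" and "finite S" "S \<noteq> {}" "a \<noteq> 0"
  shows "\<exists>f. (\<forall>i\<in>S. f i \<noteq> 0) \<and> sum f S = a"
  using assms(2-)
proof (induction S arbitrary: a rule: finite_ne_induct)
  case (singleton i)
  then show ?case by (intro exI[of _ "\<lambda>_. a"]) simp
next
  case (insert i S)
  obtain b c where "b \<noteq> 0" "c \<noteq> 0" "a = b + c"
    using dense insert.prems unfolding plus_dense_def by blast
  moreover obtain f where "\<forall>j\<in>S. f j \<noteq> 0" "sum f S = c"
    using insert.IH \<open>c \<noteq> 0\<close> by blast
  moreover have "sum (f(i := b)) S = sum f S"
    using insert.hyps by (intro sum.cong) auto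
  ultimately show ?case
    using insert.hyps by (intro exI[of _ "f(i := b)"]) (auto simp: add.commute)
qed

lemma chi_sum_lift:
  fixes x :: "'k::comm_semiring_1"
  assumes dense: "plus_dense TYPE('k)" and S: "finite S" and y: "(\<Sum>i\<in>S. y i) = chi x"
  shows "\<exists>f. (\<forall>i\<in>S. chi (f i) = y i) \<and> sum f S = x"
proof (cases "x = 0")
  case True
  with y S have "\<forall>i\<in>S. y i = 0" by (simp add: bsr_sum_eq_0_iff)
  with True show ?thesis by (intro exI[of _ "\<lambda>_. 0"]) simp
next
  case False
  define T where "T = {i\<in>S. y i \<noteq> 0}"
  have "finite T" using S by (simp add: T_def)
  moreover have "T \<noteq> {}"
    using y False bsr_sum_eq_0_iff[OF S, of y] by (auto simp: T_def)
  ultimately obtain g where g: "\<forall>i\<in>T. g i \<noteq> 0" "sum g T = x"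
    using plus_dense_sum_nonzero[OF dense _ _ False] by blast
  define f where "f i = (if i \<in> T then g i else 0)" for i
  have "sum f S = sum g T"
    using S by (simp add: f_def sum.If_cases T_def Int_def)
  moreover have "chi (f i) = y i" if "i \<in> S" for i
    using g(1) that by (intro bsr_eqI) (simp add: f_def T_def)
  ultimately show ?thesis using g(2) by blast
qed

section \<open>Evaluating defining sentences\<close>

lemma R_val_eq_0_iff:
  assumes "\<And>s. X s = 0 \<longleftrightarrow> Y s = 0"
  shows "R_val A V X as = 0 \<longleftrightarrow> R_val A V Y as = 0"
  using assms unfolding R_val_def by simp

lemma R_val_chi: "R_val A V (chi \<circ> X) as = chi (R_val A V X as)"
  unfolding R_val_def by simp

lemma eval_chi_fo:
  fixes X :: "('v::linorder \<Rightarrow> 'a) \<Rightarrow> 'k::comm_semiring_1"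
  assumes positive: "positive_semiring TYPE('k)" and "finite A" and "is_fo k p"
  shows "eval A I V (chi \<circ> X) s p = chi (eval A I V X s p)"
  using assms(3)
  by (induction p arbitrary: s)
    (simp_all add: R_val_chi chi_add[OF positive] chi_mult[OF positive]
      chi_sum[OF positive \<open>finite A\<close>] chi_prod[OF positive \<open>finite A\<close>])

text \<open>Over positive semirings the connectives only see whether values are zero, so nonzero values
  pass between two teams with the same support as soon as the admitted comparisons do.\<close>

lemma in_frag_eval_nonzero_transfer:
  fixes X :: "('v::linorder \<Rightarrow> 'a) \<Rightarrow> 'k::comm_semiring_1"
    and Y :: "('v \<Rightarrow> 'a) \<Rightarrow> 'l::comm_semiring_1"
  assumes pos_k: "positive_semiring TYPE('k)" and pos_l: "positive_semiring TYPE('l)"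
    and A: "finite A"
    and same_support: "\<And>s. X s = 0 \<longleftrightarrow> Y s = 0"
    and cmp_transfer: "\<And>c p q s. ok c p q \<Longrightarrow>
      cmp_holds c (eval A I V X s p) (eval A I V X s q) \<Longrightarrow>
      cmp_holds c (eval A I V Y s p) (eval A I V Y s q)"
  shows "in_frag ok k th \<Longrightarrow> eval A I V X s th \<noteq> 0 \<Longrightarrow> eval A I V Y s th \<noteq> 0"
proof (induction th arbitrary: s)
  case (RA xs)
  then show ?case using R_val_eq_0_iff[of X Y, OF same_support] by simp
next
  case (NRA xs)
  then show ?case using R_val_eq_0_iff[of X Y, OF same_support] by (simp split: if_splits)
next
  case (Conj p q)
  then show ?case by (simp add: positive_mult_eq_0_iff[OF pos_k] positive_mult_eq_0_iff[OF pos_l])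
next
  case (Disj p q)
  then show ?case by (auto simp: positive_add_eq_0_iff[OF pos_k] positive_add_eq_0_iff[OF pos_l])
next
  case (Forall x p)
  from Forall.prems(2) have "\<forall>a\<in>A. eval A I V X (s(x := a)) p \<noteq> 0"
    by (simp add: positive_prod_eq_0_iff[OF pos_k A])
  then have "\<forall>a\<in>A. eval A I V Y (s(x := a)) p \<noteq> 0"
    using Forall.IH Forall.prems(1) by simp
  then show ?case by (simp add: positive_prod_eq_0_iff[OF pos_l A])
next
  case (Exists x p)
  from Exists.prems(2) obtain a where "a \<in> A" "eval A I V X (s(x := a)) p \<noteq> 0"
    using positive_sum_eq_0_iff[OF pos_k A] by force
  moreover have "in_frag ok k p" using Exists.prems(1) by simp
  ultimately have "\<not> (\<forall>b\<in>A. eval A I V Y (s(x := b)) p = 0)"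
    using Exists.IH by blast
  then show ?case by (simp add: positive_sum_eq_0_iff[OF pos_l A])
next
  case (Cmp c p q)
  then show ?case using cmp_transfer by (simp split: if_splits)
qed (simp_all split: if_splits)

definition cmp_C :: "nat \<Rightarrow> cmp \<Rightarrow> ('r, 'v) rf \<Rightarrow> ('r, 'v) rf \<Rightarrow> bool" where
  "cmp_C k c p q \<longleftrightarrow>
     is_fo k p \<and> (c = CEq \<and> is_fo k q \<or> c = CNeq \<and> q = Bot \<or> c = CLe \<and> is_fo k q)"

definition cmp_D :: "nat \<Rightarrow> cmp \<Rightarrow> ('r, 'v) rf \<Rightarrow> ('r, 'v) rf \<Rightarrow> bool" where
  "cmp_D k c p q \<longleftrightarrow>
     is_fo k p \<and> (c = CEq \<and> q = Bot \<or> c = CNeq \<and> is_fo k q \<or> c = CNle \<and> is_fo k q)"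

lemma frag_C_eq_in_frag: "frag_C k = in_frag (cmp_C k) k"
  unfolding frag_C_def cmp_C_def by simp

lemma frag_D_eq_in_frag: "frag_D k = in_frag (cmp_D k) k"
  unfolding frag_D_def cmp_D_def by simp

lemma frag_C_eval_chi:
  fixes X :: "('v::linorder \<Rightarrow> 'a) \<Rightarrow> 'k::comm_semiring_1"
  assumes positive: "positive_semiring TYPE('k)" and A: "finite A"
    and "frag_C k th" and "eval A I V X s th \<noteq> 0"
  shows "eval A I V (chi \<circ> X) s th \<noteq> 0"
proof (rule in_frag_eval_nonzero_transfer[where ok = "cmp_C k" and X = X and Y = "chi \<circ> X"])
  show "cmp_holds c (eval A I V (chi \<circ> X) t p) (eval A I V (chi \<circ> X) t q)"
    if "cmp_C k c p q" and "cmp_holds c (eval A I V X t p) (eval A I V X t q)" for c p q t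
    using that eval_chi_fo[OF positive A, of k _ I V X t]
      nat_le_chi[OF positive, of "eval A I V X t p" "eval A I V X t q"]
    by (auto simp: cmp_C_def cmp_holds_def chi_eq_iff)
qed (use assms in \<open>simp_all add: positive_semiring_bsr frag_C_eq_in_frag\<close>)

lemma frag_D_eval_chi:
  fixes X :: "('v::linorder \<Rightarrow> 'a) \<Rightarrow> 'k::comm_semiring_1"
  assumes positive: "positive_semiring TYPE('k)" and A: "finite A"
    and "frag_D k th" and "eval A I V (chi \<circ> X) s th \<noteq> 0"
  shows "eval A I V X s th \<noteq> 0"
proof (rule in_frag_eval_nonzero_transfer[where ok = "cmp_D k" and X = "chi \<circ> X" and Y = X])
  show "cmp_holds c (eval A I V X t p) (eval A I V X t q)"
    if "cmp_D k c p q" and "cmp_holds c (eval A I V (chi \<circ> X) t p) (eval A I V (chi \<circ> X) t q)"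
    for c p q t
    using that eval_chi_fo[OF positive A, of k _ I V X t]
      nat_le_chi[OF positive, of "eval A I V X t p" "eval A I V X t q"]
    by (auto simp: cmp_D_def cmp_holds_def chi_eq_iff)
qed (use assms in \<open>simp_all add: positive_semiring_bsr frag_D_eq_in_frag\<close>)

section \<open>Team semantics\<close>

lemma As_upd: "s \<in> As V A \<Longrightarrow> x \<notin> V \<Longrightarrow> a \<in> A \<Longrightarrow> s(x := a) \<in> As (insert x V) A"
  unfolding As_def by (auto simp: PiE_def extensional_def)

lemma As_upd_undefined: "s \<in> As V A \<Longrightarrow> x \<notin> V \<Longrightarrow> (s(x := a))(x := undefined) = s"
  unfolding As_def by (auto simp: PiE_def extensional_def)

lemma As_insert_restrict:
  "t \<in> As (insert x V) A \<Longrightarrow> x \<notin> V \<Longrightarrow>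
   t(x := undefined) \<in> As V A \<and> t x \<in> A \<and> (t(x := undefined))(x := t x) = t"
  unfolding As_def by (auto simp: PiE_def extensional_def)

lemma Supp_chi [simp]: "Supp A V (chi \<circ> X) = Supp A V X"
  unfolding Supp_def by simp

lemma is_team_chi: "is_team A V Y \<Longrightarrow> is_team A V (chi \<circ> Y)"
  unfolding is_team_def by simp

lemma chi_comp_if_As:
  "chi \<circ> (\<lambda>t. if t \<in> As W A then X (f t) else 0) = (\<lambda>t. if t \<in> As W A then (chi \<circ> X) (f t) else 0)"
  by auto

lemma tsat_imp_tsat_chi:
  fixes X :: "('v::linorder \<Rightarrow> 'a) \<Rightarrow> 'k::comm_semiring_1"
  assumes positive: "positive_semiring TYPE('k)" and A: "finite A"
    and C: "\<forall>c \<in> C. definable frag_C avars adef c"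
  shows "atoms \<phi> \<subseteq> C \<Longrightarrow> wf_tf avars V \<phi> \<Longrightarrow> finite V \<Longrightarrow>
    tsat A I adef V X \<phi> \<Longrightarrow> tsat A I adef V (chi \<circ> X) \<phi>"
proof (induction \<phi> arbitrary: V X)
  case (TAtom c)
  then have "frag_C (card V) (adef c V)"
    using C unfolding definable_def by auto
  moreover have "eval A I V X (\<lambda>_. undefined) (adef c V) \<noteq> 0"
    using TAtom.prems(4) by (simp add: sent_val_def)
  ultimately have "eval A I V (chi \<circ> X) (\<lambda>_. undefined) (adef c V) \<noteq> 0"
    by (rule frag_C_eval_chi[OF positive A])
  then show ?case unfolding tsat.simps sent_val_def .
next
  case (TOr p q)
  then obtain Y Z where teams: "is_team A V Y" "is_team A V Z"
    and split: "\<forall>s \<in> As V A. Y s + Z s = X s"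
    and sat: "tsat A I adef V Y p" "tsat A I adef V Z q" by auto
  have "tsat A I adef V (chi \<circ> Y) p" "tsat A I adef V (chi \<circ> Z) q"
    using TOr.IH[OF _ _ TOr.prems(3)] sat TOr.prems(1,2) by (simp_all del: comp_apply)
  moreover have "\<forall>s \<in> As V A. (chi \<circ> Y) s + (chi \<circ> Z) s = (chi \<circ> X) s"
    using split chi_add[OF positive] by (metis comp_apply)
  ultimately show ?case
    using is_team_chi[OF teams(1)] is_team_chi[OF teams(2)] unfolding tsat.simps by blast
next
  case (TAll x p)
  then show ?case by (simp del: comp_apply add: chi_comp_if_As[symmetric])
next
  case (TEx x p)
  then obtain Y where team: "is_team A (insert x V) Y"
    and split: "\<forall>s \<in> As V A. X s = (\<Sum>a\<in>A. Y (s(x := a)))"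
    and sat: "tsat A I adef (insert x V) Y p" by auto
  have "tsat A I adef (insert x V) (chi \<circ> Y) p"
    using TEx.IH[OF _ _ _ sat] TEx.prems(1-3) by (simp del: comp_apply)
  moreover have "\<forall>s \<in> As V A. (chi \<circ> X) s = (\<Sum>a\<in>A. (chi \<circ> Y) (s(x := a)))"
    using split chi_sum[OF positive A] by simp
  ultimately show ?case
    using is_team_chi[OF team] unfolding tsat.simps by blast
qed simp_all

lemma team_split_lift:
  fixes X :: "('v \<Rightarrow> 'a) \<Rightarrow> 'k::comm_semiring_1"
  assumes dense: "plus_dense TYPE('k)"
    and teams: "is_team A V Y'" "is_team A V Z'"
    and split: "\<forall>s \<in> As V A. Y' s + Z' s = chi (X s)"
  obtains Y Z where "is_team A V Y" "is_team A V Z" "\<forall>s \<in> As V A. Y s + Z s = X s"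
    "chi \<circ> Y = Y'" "chi \<circ> Z = Z'"
proof -
  have "\<forall>s \<in> As V A. \<exists>f. chi (f True) = Y' s \<and> chi (f False) = Z' s \<and> f True + f False = X s"
  proof
    fix s assume "s \<in> As V A"
    then have "(\<Sum>b\<in>UNIV. if b then Y' s else Z' s) = chi (X s)"
      using split by (simp add: UNIV_bool add.commute)
    from chi_sum_lift[OF dense _ this] show "\<exists>f. chi (f True) = Y' s \<and> chi (f False) = Z' s \<and> f True + f False = X s"
      by (auto simp: UNIV_bool add.commute)
  qed
  then obtain g where g: "\<And>s. s \<in> As V A \<Longrightarrow>
      chi (g s True) = Y' s \<and> chi (g s False) = Z' s \<and> g s True + g s False = X s"
    by metis
  let ?Y = "\<lambda>s. if s \<in> As V A then g s True else 0"
  let ?Z = "\<lambda>s. if s \<in> As V A then g s False else 0"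
  have "chi \<circ> ?Y = Y'" "chi \<circ> ?Z = Z'"
    using g teams unfolding is_team_def by (auto simp: fun_eq_iff)
  moreover have "is_team A V ?Y" "is_team A V ?Z"
    unfolding is_team_def by auto
  ultimately show thesis using that g by simp
qed

lemma team_sum_lift:
  fixes X :: "('v \<Rightarrow> 'a) \<Rightarrow> 'k::comm_semiring_1"
  assumes dense: "plus_dense TYPE('k)" and A: "finite A" and x: "x \<notin> V"
    and team: "is_team A (insert x V) Y'"
    and split: "\<forall>s \<in> As V A. chi (X s) = (\<Sum>a\<in>A. Y' (s(x := a)))"
  obtains Y where "is_team A (insert x V) Y" "\<forall>s \<in> As V A. X s = (\<Sum>a\<in>A. Y (s(x := a)))"
    "chi \<circ> Y = Y'"
proof -
  have "\<forall>s \<in> As V A. \<exists>f. (\<forall>a\<in>A. chi (f a) = Y' (s(x := a))) \<and> sum f A = X s"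
    using chi_sum_lift[OF dense A] split by metis
  then obtain g where g: "\<And>s. s \<in> As V A \<Longrightarrow>
      (\<forall>a\<in>A. chi (g s a) = Y' (s(x := a))) \<and> sum (g s) A = X s"
    by metis
  define Y where "Y t = (if t \<in> As (insert x V) A then g (t(x := undefined)) (t x) else 0)" for t
  have "is_team A (insert x V) Y"
    unfolding Y_def is_team_def by auto
  moreover have "X s = (\<Sum>a\<in>A. Y (s(x := a)))" if s: "s \<in> As V A" for s
    using g[OF s] As_upd[OF s x] As_upd_undefined[OF s x] by (simp add: Y_def)
  moreover have "(chi \<circ> Y) t = Y' t" for t
    using g As_insert_restrict[OF _ x, of t A] team
    by (cases "t \<in> As (insert x V) A") (fastforce simp: Y_def is_team_def)+
  ultimately show thesis using that by blast
qed

lemma tsat_chi_imp_tsat: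
  fixes X :: "('v::linorder \<Rightarrow> 'a) \<Rightarrow> 'k::comm_semiring_1"
  assumes positive: "positive_semiring TYPE('k)" and dense: "plus_dense TYPE('k)"
    and A: "finite A" and D: "\<forall>d \<in> D. definable frag_D avars adef d"
  shows "atoms \<psi> \<subseteq> D \<Longrightarrow> wf_tf avars V \<psi> \<Longrightarrow> finite V \<Longrightarrow>
    tsat A I adef V (chi \<circ> X) \<psi> \<Longrightarrow> tsat A I adef V X \<psi>"
proof (induction \<psi> arbitrary: V X)
  case (TAtom c)
  then have "frag_D (card V) (adef c V)"
    using D unfolding definable_def by auto
  moreover have "eval A I V (chi \<circ> X) (\<lambda>_. undefined) (adef c V) \<noteq> 0"
    using TAtom.prems(4) unfolding tsat.simps sent_val_def .
  ultimately have "eval A I V X (\<lambda>_. undefined) (adef c V) \<noteq> 0"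
    by (rule frag_D_eval_chi[OF positive A])
  then show ?case by (simp add: sent_val_def)
next
  case (TOr p q)
  then obtain Y' Z' where "is_team A V Y'" "is_team A V Z'" "\<forall>s \<in> As V A. Y' s + Z' s = chi (X s)"
    and sat: "tsat A I adef V Y' p" "tsat A I adef V Z' q" by auto
  then obtain Y Z where "is_team A V Y" "is_team A V Z" "\<forall>s \<in> As V A. Y s + Z s = X s"
    and collapse: "chi \<circ> Y = Y'" "chi \<circ> Z = Z'"
    using team_split_lift[OF dense] by metis
  moreover have "tsat A I adef V Y p" "tsat A I adef V Z q"
    using TOr.IH[OF _ _ TOr.prems(3)] sat[folded collapse] TOr.prems(1,2) by (simp_all del: comp_apply)
  ultimately show ?case by auto
next
  case (TAll x p)
  then show ?case by (simp del: comp_apply add: chi_comp_if_As[symmetric])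
next
  case (TEx x p)
  then obtain Y' where "is_team A (insert x V) Y'"
    "\<forall>s \<in> As V A. chi (X s) = (\<Sum>a\<in>A. Y' (s(x := a)))"
    and sat: "tsat A I adef (insert x V) Y' p" by auto
  moreover have "x \<notin> V" using TEx.prems(2) by simp
  ultimately obtain Y where "is_team A (insert x V) Y" "\<forall>s \<in> As V A. X s = (\<Sum>a\<in>A. Y (s(x := a)))"
    and collapse: "chi \<circ> Y = Y'"
    using team_sum_lift[OF dense A] by metis
  moreover have "tsat A I adef (insert x V) Y p"
    using TEx.IH sat[folded collapse] TEx.prems(1-3) by (simp del: comp_apply)
  ultimately show ?case by auto
qed simp_all

theorem mainTheorem6:
  fixes A :: "'a set" and I :: "'r \<Rightarrow> 'a list \<Rightarrow> bool"
    and avars :: "'c \<Rightarrow> 'v::linorder set" and adef :: "'c \<Rightarrow> 'v set \<Rightarrow> ('r, 'v) rf"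
    and C D :: "'c set"
    and \<phi> \<psi> :: "('r, 'v, 'c) tf"
    and V :: "'v set" and X :: "('v \<Rightarrow> 'a) \<Rightarrow> 'k::comm_semiring_1"
  assumes K_pos: "positive_semiring TYPE('k)"
    and C_def: "\<forall>c \<in> C. definable frag_C avars adef c"
    and D_def: "\<forall>d \<in> D. definable frag_D avars adef d"
    and phi_C: "atoms \<phi> \<subseteq> C" and phi_wf: "wf_tf avars V \<phi>"
    and psi_D: "atoms \<psi> \<subseteq> D" and psi_wf: "wf_tf avars V \<psi>"
    and A_fin: "finite A" and A_ne: "A \<noteq> {}"
    and V_fin: "finite V"
    and X_team: "is_team A V X"
  shows "(tsat A I adef V X \<phi> \<longrightarrow> tsat A I adef V (chi \<circ> X) \<phi>)
       \<and> (plus_dense TYPE('k) \<longrightarrow> tsat A I adef V (chi \<circ> X) \<psi> \<longrightarrow> tsat A I adef V X \<psi>)"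
  using tsat_imp_tsat_chi[OF K_pos A_fin C_def phi_C phi_wf V_fin]
    tsat_chi_imp_tsat[OF K_pos _ A_fin D_def psi_D psi_wf V_fin] by blast

end
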